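(* Let $\lambda\in(g,1)$ with $g=\frac{\sqrt5-1}{2}$, let $\ell\in\mathbb{N}$ satisfy $1<\lambda^2+\cdots+\lambda^\ell$, and let $\mathcal{U}$ and $\mathcal{U}_a$ be as in the context. There exists a constant $c$ with $0<c<\lambda^\ell|\mathcal{U}|/4$ such that for every $n\ge1$ and every $a\in\{0,1\}^{(n-1)\ell}$, if $J\subset\mathcal{U}_a$ is an interval with $|J|\le c\lambda^{n\ell}$, then there exist $a',a''\in\{0,1\}^{\ell-1}$ with $$J\subset\mathcal{U}_{aa'0}\cap\mathcal{U}_{aa''1}.$$
   Context: For a finite word $a=a_1\dots a_n$ over $\{0,1\}$, $\xi(a)=\sum_{j=1}^n a_j\lambda^j$. Let $\mathcal{U}=(\alpha,\beta)$ with $\alpha=\frac{\lambda^\ell}{1-\lambda^\ell}$ and $\beta=\frac{\lambda}{1-\lambda}-\frac{\lambda^\ell}{1-\lambda^\ell}$, and for $a\in\{0,1\}^n$ let $\mathcal{U}_a=\xi(a)+\lambda^n\mathcal{U}$. Juxtaposition $aa'0$ denotes concatenation of words. $|J|$ denotes the length of an interval $J$. *)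

theory Defs
  imports "HOL-Analysis.Analysis"
begin

definition binword :: "nat list \<Rightarrow> bool" where
  "binword a \<longleftrightarrow> set a \<subseteq> {0, 1}"

definition xi :: "real \<Rightarrow> nat list \<Rightarrow> real" where
  "xi lam a = (\<Sum>j<length a. real (a ! j) * lam ^ (j + 1))"

definition alphaU :: "real \<Rightarrow> nat \<Rightarrow> real" where
  "alphaU lam l = lam ^ l / (1 - lam ^ l)"

definition betaU :: "real \<Rightarrow> nat \<Rightarrow> real" where
  "betaU lam l = lam / (1 - lam) - lam ^ l / (1 - lam ^ l)"

definition UU :: "real \<Rightarrow> nat \<Rightarrow> real set" where
  "UU lam l = {alphaU lam l <..< betaU lam l}"

definition Ua :: "real \<Rightarrow> nat \<Rightarrow> nat list \<Rightarrow> real set" where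
  "Ua lam l a = (\<lambda>u. xi lam a + lam ^ length a * u) ` UU lam l"

definition ilen :: "real set \<Rightarrow> real" where
  "ilen J = Sup J - Inf J"

end

theory Submission
  imports Defs
begin

text \<open>For a word \<open>w\<close> of length \<open>l - 1\<close> the cylinders \<open>U\<^sub>w\<^sub>0\<close> and \<open>U\<^sub>w\<^sub>1\<close> are the translates of
  \<open>lam ^ l * U\<close> by \<open>xi w\<close> and \<open>xi w + lam ^ l\<close>. The endpoints of \<open>U\<close> are the fixed points of
  \<open>x \<mapsto> lam ^ l + lam ^ l * x\<close> and \<open>x \<mapsto> xi 1\<^sup>l\<^sup>-\<^sup>1 + lam ^ l * x\<close>, so each of the two families
  reaches both ends of \<open>U\<close>; and since \<open>lam \<ge> 1/2\<close>, greedy expansion shows that the points \<open>xi w\<close>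
  are \<open>lam ^ (l - 1)\<close>-dense. Hence every window of \<open>U\<close> shorter than
  \<open>lam ^ l * \<bar>U\<bar> - lam ^ (l - 1)\<close> lies in one cylinder of each family, and this bound is positive
  because \<open>lam * \<bar>U\<bar> > 1\<close>, which follows from \<open>lam ^ 2 + \<dots> + lam ^ l > 1\<close>. Finally
  \<open>U\<^sub>a\<^sub>b = xi a + lam ^ length a * U\<^sub>b\<close> transports the statement from \<open>U\<close> to every \<open>U\<^sub>a\<close>.\<close>

lemma image_add_mult_greaterThanLessThan:
  fixes s K :: real
  assumes "0 < K"
  shows "(\<lambda>x. s + K * x) ` {a<..<b} = {s + K * a<..<s + K * b}"
  using assms by (auto simp: field_simps intro: rev_image_eqI[where x = "(y - s) / K" for y])

lemma image_add_mult_atLeastAtMost: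
  fixes s K :: real
  assumes "0 < K"
  shows "(\<lambda>x. s + K * x) ` {a..b} = {s + K * a..s + K * b}"
  using assms by (auto simp: field_simps intro: rev_image_eqI[where x = "(y - s) / K" for y])

lemma binword_replicate: "d \<in> {0, 1} \<Longrightarrow> binword (replicate m d)"
  unfolding binword_def by auto

lemma xi_snoc: "xi lam (w @ [d]) = xi lam w + real d * lam ^ (length w + 1)"
  unfolding xi_def by (simp add: nth_append lessThan_Suc)

lemma xi_append: "xi lam (a @ b) = xi lam a + lam ^ length a * xi lam b"
proof (induction b rule: rev_induct)
  case Nil
  then show ?case by (simp add: xi_def)
next
  case (snoc d b)
  then show ?case
    by (simp add: xi_snoc flip: append_assoc) (simp add: algebra_simps power_add)
qed

lemma xi_replicate_0 [simp]: "xi lam (replicate m 0) = 0"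
  unfolding xi_def by simp

lemma xi_replicate_1:
  assumes "lam \<noteq> 1"
  shows "xi lam (replicate m 1) = lam * (1 - lam ^ m) / (1 - lam)"
  unfolding xi_def using assms by (simp add: sum_distrib_left[symmetric] sum_gp_strict)

lemma binword_greedy_approx:
  fixes lam t :: real
  assumes "1/2 \<le> lam" "lam < 1" "0 < t"
  shows "\<exists>w. binword w \<and> length w = m \<and> xi lam w < t \<and>
    (t - lam ^ m \<le> xi lam w \<or> w = replicate m 1)"
proof (induction m)
  case 0
  then show ?case using assms by (auto simp: xi_def binword_def)
next
  case (Suc m)
  then obtain w where w: "binword w" "length w = m" "xi lam w < t"
    "t - lam ^ m \<le> xi lam w \<or> w = replicate m 1" by blast
  show ?case
  proof (cases "xi lam w + lam ^ Suc m < t")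
    case True
    \<comment> \<open>\<open>1/2 \<le> lam\<close> is what keeps the error of the greedy digits below the last digit weight.\<close>
    have "lam ^ m \<le> 2 * lam ^ Suc m"
      using mult_left_mono[of 1 "2 * lam" "lam ^ m"] assms by simp
    have "t - lam ^ Suc m \<le> xi lam (w @ [1]) \<or> w @ [1] = replicate (Suc m) 1"
      using w(4)
    proof
      assume "t - lam ^ m \<le> xi lam w"
      then show ?thesis using \<open>lam ^ m \<le> 2 * lam ^ Suc m\<close> w(2) by (simp add: xi_snoc)
    next
      assume "w = replicate m 1"
      then show ?thesis by (simp add: replicate_append_same)
    qed
    then show ?thesis
      using True w by (intro exI[of _ "w @ [1]"]) (simp add: xi_snoc binword_def)
  next
    case False
    then show ?thesis
      using w by (intro exI[of _ "w @ [0]"]) (simp add: xi_snoc binword_def)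
  qed
qed

lemma exists_binword_translate_cover:
  fixes lam A B lo hi t d :: real
  assumes lam: "1/2 \<le> lam" "lam < 1"
    and "A \<le> lo" "hi \<le> xi lam (replicate m 1) + B" "d < B - A - lam ^ m"
  shows "\<exists>w. binword w \<and> length w = m \<and>
    {lo<..<hi} \<inter> {t..t + d} \<subseteq> {xi lam w + A<..<xi lam w + B}"
proof (cases "A < t")
  case True
  then obtain w where "binword w" "length w = m" "xi lam w < t - A"
    "t - A - lam ^ m \<le> xi lam w \<or> w = replicate m 1"
    using binword_greedy_approx[OF lam, of "t - A" m] by auto
  then show ?thesis using assms by (intro exI[of _ w]) auto
next
  case False
  have "0 \<le> lam ^ m"
    using lam by simp
  then have "d < B - A"
    using assms(5) by linarith
  then show ?thesis
    using False assms(3) by (intro exI[of _ "replicate m 0"]) (auto simp: binword_replicate)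
qed

lemma Ua_eq_interval:
  assumes "0 < lam"
  shows "Ua lam l w = {xi lam w + lam ^ length w * alphaU lam l<..<xi lam w + lam ^ length w * betaU lam l}"
  unfolding Ua_def UU_def using assms by (simp add: image_add_mult_greaterThanLessThan)

lemma Ua_append: "Ua lam l (a @ b) = (\<lambda>x. xi lam a + lam ^ length a * x) ` Ua lam l b"
  unfolding Ua_def by (simp add: image_image xi_append power_add algebra_simps)

lemma alphaU_fixpoint:
  assumes "lam ^ l \<noteq> 1"
  shows "lam ^ l + lam ^ l * alphaU lam l = alphaU lam l"
  unfolding alphaU_def using assms by (simp add: field_simps)

lemma betaU_fixpoint:
  assumes "lam \<noteq> 1" "lam ^ l \<noteq> 1" "1 \<le> l"
  shows "xi lam (replicate (l - 1) 1) + lam ^ l * betaU lam l = betaU lam l"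
proof -
  have "lam * lam ^ (l - 1) = lam ^ l"
    using assms(3) by (simp flip: power_Suc)
  then have "xi lam (replicate (l - 1) 1) = (lam - lam ^ l) / (1 - lam)"
    unfolding xi_replicate_1[OF assms(1)] by (simp add: right_diff_distrib)
  moreover have "(1 - u) * (lam / (1 - lam) - u / (1 - u)) = (lam - u) / (1 - lam)"
    if "u \<noteq> 1" for u :: real
    using that assms(1) by (simp add: divide_simps) (simp add: algebra_simps)
  then have "(1 - lam ^ l) * betaU lam l = (lam - lam ^ l) / (1 - lam)"
    unfolding betaU_def alphaU_def using assms(2) .
  ultimately show ?thesis
    by (simp add: algebra_simps)
qed

lemma UU_window_split:
  fixes lam d t :: real
  assumes lam: "1/2 \<le> lam" "lam < 1" and l: "1 \<le> l"
    and d: "d < lam ^ l * (betaU lam l - alphaU lam l) - lam ^ (l - 1)"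
  shows "\<exists>a' a''. binword a' \<and> length a' = l - 1 \<and> binword a'' \<and> length a'' = l - 1 \<and>
    UU lam l \<inter> {t..t + d} \<subseteq> Ua lam l (a' @ [0]) \<inter> Ua lam l (a'' @ [1])"
proof -
  let ?u = "lam ^ l" and ?\<alpha> = "alphaU lam l" and ?\<beta> = "betaU lam l"
  have u: "0 \<le> ?u" "?u < 1"
    using lam l by (auto simp: power_less_one_iff)
  have \<alpha>: "?u + ?u * ?\<alpha> = ?\<alpha>" and \<beta>: "xi lam (replicate (l - 1) 1) + ?u * ?\<beta> = ?\<beta>"
    using alphaU_fixpoint betaU_fixpoint lam l u by auto
  have cylinder: "Ua lam l (w @ [e]) = {xi lam w + (real e * ?u + ?u * ?\<alpha>)<..<xi lam w + (real e * ?u + ?u * ?\<beta>)}"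
    if "length w = l - 1" for w e
  proof -
    have "length (w @ [e]) = l" using that l by simp
    then show ?thesis
      using lam by (simp add: Ua_eq_interval xi_snoc algebra_simps)
  qed
  obtain a' where a': "binword a'" "length a' = l - 1"
    "{?\<alpha><..<?\<beta>} \<inter> {t..t + d} \<subseteq> {xi lam a' + ?u * ?\<alpha><..<xi lam a' + ?u * ?\<beta>}"
    using exists_binword_translate_cover[OF lam, of "?u * ?\<alpha>" ?\<alpha> ?\<beta> "l - 1" "?u * ?\<beta>" d t] \<alpha> \<beta> d u
    by (auto simp: algebra_simps)
  obtain a'' where a'': "binword a''" "length a'' = l - 1"
    "{?\<alpha><..<?\<beta>} \<inter> {t..t + d} \<subseteq> {xi lam a'' + (?u + ?u * ?\<alpha>)<..<xi lam a'' + (?u + ?u * ?\<beta>)}"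
    using exists_binword_translate_cover[OF lam, of "?u + ?u * ?\<alpha>" ?\<alpha> ?\<beta> "l - 1" "?u + ?u * ?\<beta>" d t] \<alpha> \<beta> d u
    by (auto simp: algebra_simps)
  moreover have "Ua lam l (a' @ [0]) = {xi lam a' + ?u * ?\<alpha><..<xi lam a' + ?u * ?\<beta>}"
    using cylinder[OF a'(2), of 0] by simp
  moreover have "Ua lam l (a'' @ [1]) = {xi lam a'' + (?u + ?u * ?\<alpha>)<..<xi lam a'' + (?u + ?u * ?\<beta>)}"
    using cylinder[OF a''(2), of 1] by simp
  ultimately show ?thesis
    using a' unfolding UU_def by blast
qed

lemma Ua_window_split:
  fixes lam d t :: real
  assumes lam: "1/2 \<le> lam" "lam < 1" and l: "1 \<le> l"
    and d: "d < lam ^ l * (betaU lam l - alphaU lam l) - lam ^ (l - 1)"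
  shows "\<exists>a' a''. binword a' \<and> length a' = l - 1 \<and> binword a'' \<and> length a'' = l - 1 \<and>
    Ua lam l a \<inter> {t..t + lam ^ length a * d}
      \<subseteq> Ua lam l (a @ a' @ [0]) \<inter> Ua lam l (a @ a'' @ [1])"
proof -
  let ?K = "lam ^ length a"
  define f where "f = (\<lambda>x. xi lam a + ?K * x)"
  have K: "0 < ?K" using lam by simp
  have "inj f" using lam by (auto simp: f_def inj_on_def)
  obtain a' a'' where a': "binword a'" "length a' = l - 1" and a'': "binword a''" "length a'' = l - 1"
    and split: "UU lam l \<inter> {(t - xi lam a) / ?K..(t - xi lam a) / ?K + d}
      \<subseteq> Ua lam l (a' @ [0]) \<inter> Ua lam l (a'' @ [1])"
    using UU_window_split[OF lam l d] by blast
  have "Ua lam l a = f ` UU lam l"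
    by (simp add: Ua_def f_def)
  moreover have "{t..t + ?K * d} = f ` {(t - xi lam a) / ?K..(t - xi lam a) / ?K + d}"
    unfolding f_def image_add_mult_atLeastAtMost[OF K] using lam by (simp add: distrib_left)
  ultimately have "Ua lam l a \<inter> {t..t + ?K * d} = f ` (UU lam l \<inter> {(t - xi lam a) / ?K..(t - xi lam a) / ?K + d})"
    by (simp add: image_Int[OF \<open>inj f\<close>])
  also have "\<dots> \<subseteq> f ` Ua lam l (a' @ [0]) \<inter> f ` Ua lam l (a'' @ [1])"
    using split by blast
  also have "\<dots> = Ua lam l (a @ a' @ [0]) \<inter> Ua lam l (a @ a'' @ [1])"
    by (simp add: Ua_append f_def)
  finally show ?thesis using a' a'' by blast
qed

lemma one_lt_lam_mult_gap:
  fixes lam u :: real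
  assumes "0 < lam" "lam < 1" "0 < u" "u < 1" "1 - lam < lam\<^sup>2 - lam * u"
  shows "1 < lam * (lam / (1 - lam) - 2 * u / (1 - u))"
proof -
  have "lam * u < lam\<^sup>2 + lam - 1"
    using assms(5) by simp
  also have "\<dots> \<le> lam * (2 * lam - 1)"
    using zero_le_power2[of "lam - 1"] by (simp add: power2_eq_square algebra_simps)
  finally have "u < 2 * lam - 1"
    using assms(1) by simp
  then have "(1 - lam) * (1 - u) < lam\<^sup>2 * (1 - u) - 2 * lam * u * (1 - lam)"
    using assms mult_strict_right_mono[OF assms(5), of "1 - u"]
      mult_left_mono[of "2 - 2 * lam" "1 - u" "lam * u"]
    by (simp add: algebra_simps)
  moreover have "lam * (lam / (1 - lam) - 2 * u / (1 - u))
      = (lam\<^sup>2 * (1 - u) - 2 * lam * u * (1 - lam)) / ((1 - lam) * (1 - u))"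
    using assms by (simp add: field_simps power2_eq_square)
  ultimately show ?thesis
    using assms by simp
qed

lemma one_lt_lam_mult_UU_length:
  fixes lam :: real
  assumes "0 < lam" "lam < 1" "1 < (\<Sum>k\<in>{2..l}. lam ^ k)"
  shows "1 < lam * (betaU lam l - alphaU lam l)"
proof -
  have "2 \<le> l"
    using assms(3) by (cases "2 \<le> l") auto
  then have u: "0 < lam ^ l" "lam ^ l < 1"
    using assms(1,2) by (auto simp: power_less_one_iff)
  have "1 - lam < (1 - lam) * (\<Sum>k\<in>{2..l}. lam ^ k)"
    using assms(2,3) by simp
  also have "\<dots> = lam\<^sup>2 - lam * lam ^ l"
    using sum_gp_multiplied[OF \<open>2 \<le> l\<close>, of lam] by simp
  finally have "1 - lam < lam\<^sup>2 - lam * lam ^ l" .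
  from one_lt_lam_mult_gap[OF assms(1,2) u this] show ?thesis
    unfolding betaU_def alphaU_def by (simp add: algebra_simps)
qed


lemma subset_Inf_ilen:
  fixes J :: "real set"
  assumes "bdd_above J" "bdd_below J"
  shows "J \<subseteq> {Inf J..Inf J + ilen J}"
  unfolding ilen_def using assms by (auto intro: cInf_lower cSup_upper)

lemma Ua_split_small_subset:
  fixes lam d :: real and J :: "real set"
  assumes lam: "1/2 \<le> lam" "lam < 1" and l: "1 \<le> l"
    and d: "d < lam ^ l * (betaU lam l - alphaU lam l) - lam ^ (l - 1)"
    and J: "J \<subseteq> Ua lam l a" "ilen J \<le> lam ^ length a * d"
  shows "\<exists>a' a''. binword a' \<and> length a' = l - 1 \<and> binword a'' \<and> length a'' = l - 1 \<and>
    J \<subseteq> Ua lam l (a @ a' @ [0]) \<inter> Ua lam l (a @ a'' @ [1])"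
proof -
  have "bdd_above J" "bdd_below J"
    using J lam by (auto simp: Ua_eq_interval intro: bdd_above_mono bdd_below_mono)
  then have "J \<subseteq> Ua lam l a \<inter> {Inf J..Inf J + lam ^ length a * d}"
    using J subset_Inf_ilen by fastforce
  then show ?thesis
    using Ua_window_split[OF lam l d, of a "Inf J"] by blast
qed

lemma exists_window_constant:
  fixes lam D :: real
  assumes "0 < lam" "1 \<le> l" "lam ^ l < 1" "1 < lam * D"
  shows "\<exists>c. 0 < c \<and> c < lam ^ l * D / 4 \<and> c * lam ^ l < lam ^ l * D - lam ^ (l - 1)"
proof (intro exI conjI)
  let ?u = "lam ^ l" and ?c = "lam ^ l * (D - 1 / lam) / 4"
  have u: "0 < ?u" and D: "0 < D - 1 / lam"
    using assms by (simp_all add: field_simps)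
  then show "0 < ?c"
    by simp
  show "?c < ?u * D / 4"
    using u assms(1) by (simp add: right_diff_distrib)
  have "?c * ?u = ?u * (D - 1 / lam) * (?u / 4)"
    by simp
  also have "\<dots> < ?u * (D - 1 / lam)"
    using mult_strict_left_mono[of "?u / 4" 1 "?u * (D - 1 / lam)"] D u assms(3) by simp
  also have "\<dots> = ?u * D - lam ^ (l - 1)"
    using assms(1,2) by (simp add: right_diff_distrib power_diff)
  finally show "?c * ?u < ?u * D - lam ^ (l - 1)" .
qed

theorem corollary3p2:
  fixes lam :: real and l :: nat
  assumes "(sqrt 5 - 1) / 2 < lam" and "lam < 1"
    and "1 < (\<Sum>k\<in>{2..l}. lam ^ k)"
  shows "\<exists>c::real. 0 < c \<and> c < lam ^ l * (betaU lam l - alphaU lam l) / 4 \<and>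
     (\<forall>n\<ge>1. \<forall>a. binword a \<and> length a = (n - 1) * l \<longrightarrow>
        (\<forall>J. is_interval J \<and> J \<subseteq> Ua lam l a \<and> ilen J \<le> c * lam ^ (n * l) \<longrightarrow>
           (\<exists>a' a''. binword a' \<and> length a' = l - 1 \<and> binword a'' \<and> length a'' = l - 1 \<and>
              J \<subseteq> Ua lam l (a @ a' @ [0]) \<inter> Ua lam l (a @ a'' @ [1]))))"
proof -
  have "2 < sqrt 5"
    by (rule real_less_rsqrt) simp
  then have lam: "1/2 \<le> lam" "lam < 1"
    using assms(1,2) by (simp_all add: field_simps)
  have l: "1 \<le> l"
    using assms(3) by (cases "1 \<le> l") auto
  have "0 < lam" "lam ^ l < 1"
    using lam l by (simp_all add: power_less_one_iff)
  moreover have "1 < lam * (betaU lam l - alphaU lam l)"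
    using one_lt_lam_mult_UU_length[OF \<open>0 < lam\<close> assms(2,3)] .
  ultimately obtain c where c: "0 < c" "c < lam ^ l * (betaU lam l - alphaU lam l) / 4"
    and gap: "c * lam ^ l < lam ^ l * (betaU lam l - alphaU lam l) - lam ^ (l - 1)"
    using exists_window_constant[OF _ l] by blast
  show ?thesis
  proof (intro exI[of _ c] conjI allI impI)
    fix n a and J :: "real set"
    assume "1 \<le> n" and a: "binword a \<and> length a = (n - 1) * l"
      and J: "is_interval J \<and> J \<subseteq> Ua lam l a \<and> ilen J \<le> c * lam ^ (n * l)"
    then have "lam ^ (n * l) = lam ^ length a * lam ^ l"
      by (simp add: algebra_simps flip: power_add)
    then have "ilen J \<le> lam ^ length a * (c * lam ^ l)"
      using J by (simp add: mult.left_commute)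
    then show "\<exists>a' a''. binword a' \<and> length a' = l - 1 \<and> binword a'' \<and> length a'' = l - 1 \<and>
        J \<subseteq> Ua lam l (a @ a' @ [0]) \<inter> Ua lam l (a @ a'' @ [1])"
      using Ua_split_small_subset[OF lam l gap] J by blast
  qed (use c in auto)
qed

end
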